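(* Let $\alpha>0$ and let $P$ be a probability measure on $\mathbb{S}^{d-1}\times\mathbb{R}^d$ belonging to $\mathcal{M}_\alpha$, and let $P^*$ be its adjoint measure. Then: (i) $P^*$ is a probability measure and the marginal distributions induced by $P$ and $P^*$ on $\mathbb{S}^{d-1}$ coincide; (ii) for every measurable $f:\mathbb{S}^{d-1}\times(\mathbb{R}^d\setminus\{0\})\to\mathbb{R}$, $$\int_{\mathbb{S}^{d-1}\times(\mathbb{R}^d\setminus\{0\})}f(s^*,m^* )\,P^*(ds^*,dm^* )=\int_{\mathbb{S}^{d-1}\times(\mathbb{R}^d\setminus\{0\})}f(m/\|m\|,s/\|m\|)\,\|m\|^\alpha\,P(ds,dm),$$ in the sense that if one integral exists then so does the other and they are equal; (iii) $P^*\in\mathcal{M}_\alpha$; (iv) $(P^* )^*=P$.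
   Context: $\|\cdot\|$ is the Euclidean norm and $\mathbb{S}^{d-1}$ the unit sphere in $\mathbb{R}^d$. $\mathcal{M}_\alpha$ is the set of probability measures $P$ on $\mathbb{S}^{d-1}\times\mathbb{R}^d$ such that $\int_{\mathbb{S}^{d-1}\times(\mathbb{R}^d\setminus\{0\})}\mathbf{1}_S(m/\|m\|)\|m\|^\alpha P(ds,dm)\le P(S\times\mathbb{R}^d)$ for every Borel $S\subset\mathbb{S}^{d-1}$. For $P\in\mathcal{M}_\alpha$, the adjoint $P^*$ is the (a priori signed) Borel measure on $\mathbb{S}^{d-1}\times\mathbb{R}^d$ defined by $P^*(S\times\{0\})=P(S\times\mathbb{R}^d)-\int_{\mathbb{S}^{d-1}\times(\mathbb{R}^d\setminus\{0\})}\mathbf{1}_S(m/\|m\|)\|m\|^\alpha P(ds,dm)$ for Borel $S\subset\mathbb{S}^{d-1}$, and $P^*(E)=\int_{\mathbb{S}^{d-1}\times(\mathbb{R}^d\setminus\{0\})}\mathbf{1}_E(m/\|m\|,s/\|m\|)\|m\|^\alpha P(ds,dm)$ for Borel $E\subset\mathbb{S}^{d-1}\times(\mathbb{R}^d\setminus\{0\})$. *)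

theory Defs
  imports "HOL-Probability.Probability"
begin

abbreviation Sph :: "'a::euclidean_space set" where
  "Sph \<equiv> sphere 0 1"

definition Omega :: "('a::euclidean_space \<times> 'a) set" where
  "Omega = Sph \<times> UNIV"

definition Omega_nz :: "('a::euclidean_space \<times> 'a) set" where
  "Omega_nz = Sph \<times> (UNIV - {0})"

definition Omega_borel :: "('a::euclidean_space \<times> 'a) measure" where
  "Omega_borel = restrict_space borel Omega"

definition Sph_borel :: "'a::euclidean_space measure" where
  "Sph_borel = restrict_space borel Sph"

definition wt :: "real \<Rightarrow> ('a::euclidean_space \<times> 'a) \<Rightarrow> ennreal" where
  "wt \<alpha> x = indicator {y. snd y \<noteq> 0} x * ennreal (norm (snd x) powr \<alpha>)"

definition M_alpha :: "real \<Rightarrow> ('a::euclidean_space \<times> 'a) measure set" where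
  "M_alpha \<alpha> = {P. prob_space P \<and> sets P = sets Omega_borel \<and>
     (\<forall>S. S \<in> sets borel \<longrightarrow> S \<subseteq> Sph \<longrightarrow>
        (\<integral>\<^sup>+ x. indicator S (snd x /\<^sub>R norm (snd x)) * wt \<alpha> x \<partial>P) \<le> emeasure P (S \<times> UNIV))}"

text \<open>The (a priori signed) adjoint set function, on Borel sets E of S^{d-1} x R^d:
  P*(E) = P*(E \<inter> S\<times>{0}) + P*(E \<inter> S\<times>(R^d - {0})), with both parts given by the paper's formulas.
  (The image point (m/||m||, s/||m||) always lies in S\<times>(R^d-{0}).)\<close>
definition adjoint_fun :: "real \<Rightarrow> ('a::euclidean_space \<times> 'a) measure \<Rightarrow> ('a \<times> 'a) set \<Rightarrow> real" where
  "adjoint_fun \<alpha> P E =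
     (let S0 = {s. s \<in> Sph \<and> (s, 0) \<in> E} in
       measure P (S0 \<times> UNIV)
       - enn2real (\<integral>\<^sup>+ x. indicator S0 (snd x /\<^sub>R norm (snd x)) * wt \<alpha> x \<partial>P)
       + enn2real (\<integral>\<^sup>+ x. indicator E (snd x /\<^sub>R norm (snd x), fst x /\<^sub>R norm (snd x)) * wt \<alpha> x \<partial>P))"

text \<open>The adjoint as a measure object (agrees with adjoint_fun whenever the latter is nonnegative,
  which the theorem asserts in part (i)).\<close>
definition adjoint :: "real \<Rightarrow> ('a::euclidean_space \<times> 'a) measure \<Rightarrow> ('a \<times> 'a) measure" where
  "adjoint \<alpha> P = measure_of Omega (sets Omega_borel) (\<lambda>E. ennreal (adjoint_fun \<alpha> P E))"

end

theory Submission
  imports Defs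
begin

text \<open>
  Let \<open>W\<close> be the image of \<open>\<parallel>m\<parallel>^\<alpha> P\<close> under the involution \<open>(s, m) \<mapsto> (m/\<parallel>m\<parallel>, s/\<parallel>m\<parallel>)\<close> of
  \<open>S\<^sup>d\<^sup>-\<^sup>1 \<times> (\<real>\<^sup>d - {0})\<close>, and let \<open>\<pi>\<close> denote the marginal on the sphere. The condition
  \<open>P \<in> M\<^sub>\<alpha>\<close> says precisely that \<open>\<pi> W \<le> \<pi> P\<close>, so \<open>P* = W + (\<pi> P - \<pi> W) \<otimes> \<delta>\<^sub>0\<close>
  (written \<open>Q\<close>, with \<open>defect = \<pi> P - \<pi> W\<close>) is a genuine measure; it agrees with the set function of the definition, has marginal \<open>\<pi> P\<close>, and
  satisfies the change of variables (ii) by construction. Because the map is an involution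
  and the weights \<open>\<parallel>m\<parallel>^\<alpha>\<close> and \<open>\<parallel>m\<parallel>^-\<alpha>\<close> cancel, the image of \<open>\<parallel>m\<parallel>^\<alpha> P*\<close> is \<open>P\<close>
  restricted to \<open>m \<noteq> 0\<close>; this gives both \<open>P* \<in> M\<^sub>\<alpha>\<close> and \<open>P** = P\<close>.
\<close>

definition add_measure :: "'a measure \<Rightarrow> 'a measure \<Rightarrow> 'a measure" where
  "add_measure M N = measure_of (space M) (sets M) (\<lambda>A. emeasure M A + emeasure N A)"

lemma space_add_measure[simp]: "space (add_measure M N) = space M"
  and sets_add_measure[simp]: "sets (add_measure M N) = sets M"
  by (auto simp: add_measure_def)

lemma emeasure_add_measure:
  assumes "sets N = sets M" "A \<in> sets M"
  shows "emeasure (add_measure M N) A = emeasure M A + emeasure N A"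
  unfolding add_measure_def
proof (rule emeasure_measure_of_sigma)
  show "countably_additive (sets M) (\<lambda>A. emeasure M A + emeasure N A)"
  proof (rule countably_additiveI)
    fix A :: "nat \<Rightarrow> _"  assume "range A \<subseteq> sets M" "disjoint_family A"
    then show "(\<Sum>i. emeasure M (A i) + emeasure N (A i)) = emeasure M (\<Union>i. A i) + emeasure N (\<Union>i. A i)"
      using assms by (simp add: suminf_add[symmetric] suminf_emeasure)
  qed
qed (use assms in \<open>auto simp: positive_def sets.sigma_algebra_axioms\<close>)

lemma nn_integral_add_measure:
  assumes sets_N: "sets N = sets M" and f: "f \<in> borel_measurable M"
  shows "(\<integral>\<^sup>+x. f x \<partial>add_measure M N) = (\<integral>\<^sup>+x. f x \<partial>M) + (\<integral>\<^sup>+x. f x \<partial>N)"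
  using f
proof (induct rule: borel_measurable_induct)
  case (cong f g)
  then show ?case
    using sets_eq_imp_space_eq[OF sets_N] by (metis (no_types, lifting) nn_integral_cong space_add_measure)
next
  case (set A)
  then show ?case using sets_N by (simp add: emeasure_add_measure)
next
  case (mult u c)
  then show ?case using sets_N
    by (simp add: nn_integral_cmult distrib_left cong: measurable_cong_sets)
next
  case (add u v)
  then show ?case using sets_N
    by (simp add: nn_integral_add ac_simps cong: measurable_cong_sets)
next
  case (seq U)
  have U: "\<And>i. U i \<in> borel_measurable (add_measure M N)" "\<And>i. U i \<in> borel_measurable N"
    using seq sets_N by (auto cong: measurable_cong_sets)
  have mono: "incseq (\<lambda>i. \<integral>\<^sup>+x. U i x \<partial>K)" for K
    using seq by (auto intro!: nn_integral_mono simp: incseq_def le_fun_def)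
  have "(\<integral>\<^sup>+x. (SUP i. U i) x \<partial>add_measure M N) = (SUP i. (\<integral>\<^sup>+x. U i x \<partial>M) + (\<integral>\<^sup>+x. U i x \<partial>N))"
    unfolding SUP_apply using U seq by (simp add: nn_integral_monotone_convergence_SUP)
  also have "\<dots> = (SUP i. \<integral>\<^sup>+x. U i x \<partial>M) + (SUP i. \<integral>\<^sup>+x. U i x \<partial>N)"
    by (rule ennreal_SUP_add[OF mono mono])
  also have "\<dots> = (\<integral>\<^sup>+x. (SUP i. U i) x \<partial>M) + (\<integral>\<^sup>+x. (SUP i. U i) x \<partial>N)"
    unfolding SUP_apply using U seq by (simp add: nn_integral_monotone_convergence_SUP)
  finally show ?case .
qed

lemma
  fixes f g :: "_ \<Rightarrow> real"
  assumes "f \<in> borel_measurable M" "g \<in> borel_measurable N"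
    and pos: "(\<integral>\<^sup>+x. ennreal (f x) \<partial>M) = (\<integral>\<^sup>+x. ennreal (g x) \<partial>N)"
    and neg: "(\<integral>\<^sup>+x. ennreal (- f x) \<partial>M) = (\<integral>\<^sup>+x. ennreal (- g x) \<partial>N)"
  shows integrable_eq_of_nn_integral_eq: "integrable M f \<longleftrightarrow> integrable N g"
    and integral_eq_of_nn_integral_eq: "integral\<^sup>L M f = integral\<^sup>L N g"
proof -
  show *: "integrable M f \<longleftrightarrow> integrable N g"
    using assms by (simp add: real_integrable_def)
  show "integral\<^sup>L M f = integral\<^sup>L N g"
    using * pos neg by (cases "integrable M f") (simp_all add: real_lebesgue_integral_def not_integrable_integral_eq)
qed

text \<open>The involution, extended by the identity on the zero section, which carries no weight.\<close>

definition invert :: "'a::real_normed_vector \<times> 'a \<Rightarrow> 'a \<times> 'a" where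
  "invert x = (if snd x = 0 then x else (snd x /\<^sub>R norm (snd x), fst x /\<^sub>R norm (snd x)))"

lemma space_Omega_borel[simp]: "space Omega_borel = Omega"
  by (simp add: Omega_borel_def space_restrict_space)

lemma space_Sph_borel[simp]: "space Sph_borel = Sph"
  by (simp add: Sph_borel_def space_restrict_space)

lemma Omega_in_sets_borel[measurable]: "(Omega :: ('a::euclidean_space \<times> 'a) set) \<in> sets borel"
  unfolding Omega_def by (intro borel_closed closed_Times) auto

lemma sets_Omega_borel_iff: "E \<in> sets Omega_borel \<longleftrightarrow> E \<subseteq> Omega \<and> E \<in> sets borel"
  unfolding Omega_borel_def by (subst sets_restrict_space_iff) auto

lemma sets_Sph_borel_iff: "S \<in> sets Sph_borel \<longleftrightarrow> S \<subseteq> Sph \<and> S \<in> sets borel"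
  unfolding Sph_borel_def by (subst sets_restrict_space_iff) auto

lemma Times_in_sets_Omega_borel:
  "S \<in> sets Sph_borel \<Longrightarrow> T \<in> sets borel \<Longrightarrow> S \<times> T \<in> sets Omega_borel"
  by (auto simp: sets_Omega_borel_iff sets_Sph_borel_iff Omega_def borel_prod[symmetric])

lemma fst_measurable_Sph_borel[measurable]:
  "fst \<in> measurable Omega_borel (Sph_borel :: 'a::euclidean_space measure)"
  unfolding Omega_borel_def Sph_borel_def
  by (intro measurable_restrict_space1 measurable_restrict_space2)
     (auto simp: Omega_def space_restrict_space borel_measurable_continuous_onI continuous_intros)

lemma zero_section_measurable[measurable]:
  "(\<lambda>s. (s, 0)) \<in> measurable Sph_borel (Omega_borel :: ('a::euclidean_space \<times> 'a) measure)"
  unfolding Omega_borel_def Sph_borel_def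
  by (intro measurable_restrict_space1 measurable_restrict_space2)
     (auto simp: Omega_def borel_measurable_continuous_onI continuous_intros)

lemma zero_slice_in_sets_Sph_borel:
  assumes "E \<in> sets Omega_borel"
  shows "{s. s \<in> Sph \<and> (s, 0) \<in> E} \<in> sets Sph_borel"
proof -
  have "(\<lambda>s. (s, 0)) -` E \<inter> space Sph_borel = {s. s \<in> Sph \<and> (s, 0) \<in> E}"
    by auto
  then show ?thesis
    using measurable_sets[OF zero_section_measurable assms] by simp
qed

lemma invert_in_Omega: "x \<in> Omega \<Longrightarrow> invert x \<in> Omega"
  by (auto simp: invert_def Omega_def)

lemma invert_invert: "x \<in> Omega \<Longrightarrow> invert (invert x) = x"
  by (auto simp: invert_def Omega_def)

lemma invert_in_Omega_nz: "x \<in> Omega_nz \<Longrightarrow> invert x \<in> Omega_nz"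
  by (auto simp: invert_def Omega_nz_def)

lemma invert_Omega_nz: "x \<in> Omega_nz \<Longrightarrow> invert x = (snd x /\<^sub>R norm (snd x), fst x /\<^sub>R norm (snd x))"
  by (auto simp: invert_def Omega_nz_def)

lemma Omega_nz_in_sets_Omega_borel[measurable]:
  "(Omega_nz :: ('a::euclidean_space \<times> 'a) set) \<in> sets Omega_borel"
  unfolding Omega_nz_def by (rule Times_in_sets_Omega_borel) (auto simp: sets_Sph_borel_iff)

lemma invert_measurable[measurable]:
  "invert \<in> measurable Omega_borel (Omega_borel :: ('a::euclidean_space \<times> 'a) measure)"
proof -
  have "(invert :: ('a \<times> 'a) \<Rightarrow> _) \<in> borel_measurable borel"
    unfolding invert_def borel_prod[symmetric] by measurable
  then show ?thesis
    unfolding Omega_borel_def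
    by (intro measurable_restrict_space1 measurable_restrict_space2)
       (auto simp: space_restrict_space invert_in_Omega)
qed

lemma wt_measurable[measurable]: "wt \<alpha> \<in> borel_measurable (borel :: ('a::euclidean_space \<times> 'a) measure)"
  unfolding wt_def borel_prod[symmetric] by measurable

lemma measurable_Omega_borel_of_borel:
  "f \<in> borel_measurable borel \<Longrightarrow> f \<in> borel_measurable Omega_borel"
  unfolding Omega_borel_def by (rule measurable_restrict_space1)

lemma wt_measurable_Omega_borel[measurable]:
  "wt \<alpha> \<in> borel_measurable (Omega_borel :: ('a::euclidean_space \<times> 'a) measure)"
  by (rule measurable_Omega_borel_of_borel) simp

lemma mult_wt_eq_invert:
  "h (snd x /\<^sub>R norm (snd x), fst x /\<^sub>R norm (snd x)) * wt \<alpha> x = h (invert x) * wt \<alpha> x"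
  by (simp add: invert_def wt_def)

lemma wt_invert_mult_wt:
  assumes "x \<in> Omega"
  shows "wt \<alpha> (invert x) * wt \<alpha> x = indicator Omega_nz x"
proof (cases "snd x = 0")
  case False
  have "norm (fst x) = 1"
    using assms by (auto simp: Omega_def)
  then have "norm (snd (invert x)) = inverse (norm (snd x))" "snd (invert x) \<noteq> 0"
    using False by (auto simp: invert_def)
  moreover have "inverse (norm (snd x)) powr \<alpha> * norm (snd x) powr \<alpha> = 1"
    using False by (simp add: powr_mult[symmetric])
  ultimately show ?thesis
    using assms False by (simp add: wt_def ennreal_mult[symmetric] Omega_def Omega_nz_def mem_Times_iff)
qed (simp add: wt_def Omega_nz_def mem_Times_iff)

lemma ennreal_indicator_scaleR: "ennreal (indicator A x *\<^sub>R r) = indicator A x * ennreal r"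
  and ennreal_uminus_indicator_scaleR: "ennreal (- (indicator A x *\<^sub>R r)) = indicator A x * ennreal (- r)"
  by (simp_all add: indicator_def)

lemma borel_measurable_indicator_Omega_nz_scaleR:
  fixes f :: "'a::euclidean_space \<times> 'a \<Rightarrow> real"
  assumes "f \<in> borel_measurable (restrict_space borel Omega_nz)"
  shows "(\<lambda>x. indicator Omega_nz x *\<^sub>R f x) \<in> borel_measurable Omega_borel"
proof -
  have "Omega_nz \<inter> space borel \<in> sets (borel :: ('a \<times> 'a) measure)"
    using Omega_nz_in_sets_Omega_borel[where 'a='a] by (simp add: sets_Omega_borel_iff)
  then show ?thesis
    using assms unfolding Omega_borel_def
    by (intro measurable_restrict_space1) (simp add: borel_measurable_restrict_space_iff)
qed

abbreviation marginal :: "('a::euclidean_space \<times> 'a) measure \<Rightarrow> 'a measure" where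
  "marginal M \<equiv> distr M Sph_borel fst"

lemma emeasure_marginal:
  assumes "sets M = sets Omega_borel" "S \<in> sets Sph_borel"
  shows "emeasure (marginal M) S = emeasure M (S \<times> UNIV)"
proof -
  have "fst \<in> measurable M Sph_borel"
    using fst_measurable_Sph_borel measurable_cong_sets[OF assms(1) refl] by blast
  moreover have "fst -` S \<inter> space M = S \<times> UNIV"
    using assms by (auto simp: sets_eq_imp_space_eq sets_Sph_borel_iff Omega_def)
  ultimately show ?thesis
    using assms by (simp add: emeasure_distr)
qed

locale M_alpha_measure =
  fixes \<alpha> :: real and P :: "('a::euclidean_space \<times> 'a) measure"
  assumes P_in_M_alpha: "P \<in> M_alpha \<alpha>"
begin

lemma prob_space_P: "prob_space P"
  and sets_P[measurable_cong]: "sets P = sets Omega_borel"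
  using P_in_M_alpha by (auto simp: M_alpha_def)

sublocale prob_space P
  by (rule prob_space_P)

lemma space_P[simp]: "space P = Omega"
  using sets_eq_imp_space_eq[OF sets_P] by simp

lemma M_alpha_bound:
  "S \<in> sets Sph_borel \<Longrightarrow>
    (\<integral>\<^sup>+ x. indicator S (snd x /\<^sub>R norm (snd x)) * wt \<alpha> x \<partial>P) \<le> emeasure P (S \<times> UNIV)"
  using P_in_M_alpha by (auto simp: M_alpha_def sets_Sph_borel_iff)

definition W :: "('a \<times> 'a) measure" where
  "W = distr (density P (wt \<alpha>)) Omega_borel invert"

lemma sets_W[measurable_cong]: "sets W = sets Omega_borel"
  by (simp add: W_def)

lemma nn_integral_W:
  assumes [measurable]: "h \<in> borel_measurable Omega_borel"
  shows "(\<integral>\<^sup>+ x. h x \<partial>W) = (\<integral>\<^sup>+ x. h (invert x) * wt \<alpha> x \<partial>P)"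
proof -
  have "(\<integral>\<^sup>+ x. h x \<partial>W) = (\<integral>\<^sup>+ x. h (invert x) \<partial>density P (wt \<alpha>))"
    unfolding W_def by (rule nn_integral_distr) simp_all
  also have "\<dots> = (\<integral>\<^sup>+ x. wt \<alpha> x * h (invert x) \<partial>P)"
    by (rule nn_integral_density) simp_all
  finally show ?thesis
    by (simp add: mult.commute)
qed

lemma emeasure_W:
  "E \<in> sets Omega_borel \<Longrightarrow> emeasure W E = (\<integral>\<^sup>+ x. indicator E (invert x) * wt \<alpha> x \<partial>P)"
  using nn_integral_W[of "indicator E"] by (simp add: nn_integral_indicator sets_W)

lemma emeasure_marginal_W:
  assumes "S \<in> sets Sph_borel"
  shows "emeasure (marginal W) S = (\<integral>\<^sup>+ x. indicator S (snd x /\<^sub>R norm (snd x)) * wt \<alpha> x \<partial>P)"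
proof -
  have "emeasure (marginal W) S = (\<integral>\<^sup>+ x. indicator (S \<times> UNIV) (invert x) * wt \<alpha> x \<partial>P)"
    using assms by (simp add: emeasure_marginal sets_W emeasure_W Times_in_sets_Omega_borel)
  also have "\<dots> = (\<integral>\<^sup>+ x. indicator S (snd x /\<^sub>R norm (snd x)) * wt \<alpha> x \<partial>P)"
    using mult_wt_eq_invert[where h="indicator (S \<times> UNIV)"] by (simp add: indicator_times)
  finally show ?thesis .
qed

lemma marginal_W_le_marginal_P:
  "S \<in> sets Sph_borel \<Longrightarrow> emeasure (marginal W) S \<le> emeasure (marginal P) S"
  by (simp add: emeasure_marginal_W emeasure_marginal sets_P M_alpha_bound)

lemma finite_measure_W: "finite_measure W"
proof (rule finite_measureI)
  have "emeasure W (space W) = emeasure (marginal W) Sph"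
    by (simp add: emeasure_marginal sets_W sets_eq_imp_space_eq[OF sets_W] sets_Sph_borel_iff Omega_def)
  also have "\<dots> \<le> emeasure (marginal P) Sph"
    by (rule marginal_W_le_marginal_P) (simp add: sets_Sph_borel_iff)
  also have "\<dots> < \<infinity>"
    by (simp add: emeasure_marginal sets_P sets_Sph_borel_iff less_top[symmetric])
  finally show "emeasure W (space W) \<noteq> \<infinity>"
    by simp
qed

definition defect :: "'a measure" where
  "defect = diff_measure (marginal P) (marginal W)"

lemma emeasure_defect:
  "S \<in> sets Sph_borel \<Longrightarrow> emeasure defect S = emeasure (marginal P) S - emeasure (marginal W) S"
  unfolding defect_def
proof (rule emeasure_diff_measure)
  show "finite_measure (marginal P)"
    by (rule finite_measure_distr) simp
  show "finite_measure (marginal W)"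
    by (rule finite_measure.finite_measure_distr[OF finite_measure_W]) simp
qed (auto simp: marginal_W_le_marginal_P)

lemma sets_defect[measurable_cong]: "sets defect = sets Sph_borel"
  by (simp add: defect_def)

definition Q :: "('a \<times> 'a) measure" where
  "Q = add_measure (distr defect Omega_borel (\<lambda>s. (s, 0))) W"

lemma sets_Q[measurable_cong]: "sets Q = sets Omega_borel"
  and space_Q[simp]: "space Q = Omega"
  by (simp_all add: Q_def)

lemma emeasure_Q:
  assumes E: "E \<in> sets Omega_borel"
  shows "emeasure Q E = emeasure defect {s. s \<in> Sph \<and> (s, 0) \<in> E} + emeasure W E"
proof -
  have "emeasure (distr defect Omega_borel (\<lambda>s. (s, 0))) E = emeasure defect {s. s \<in> Sph \<and> (s, 0) \<in> E}"
    using E by (subst emeasure_distr)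
      (auto simp: sets_eq_imp_space_eq[OF sets_defect] intro!: arg_cong[where f="emeasure defect"])
  then show ?thesis
    using E by (simp add: Q_def emeasure_add_measure sets_W)
qed

lemma adjoint_fun_eq:
  assumes "E \<in> sets Omega_borel"
  shows "adjoint_fun \<alpha> P E =
    measure P ({s. s \<in> Sph \<and> (s, 0) \<in> E} \<times> UNIV) - measure (marginal W) {s. s \<in> Sph \<and> (s, 0) \<in> E}
      + measure W E"
  using assms zero_slice_in_sets_Sph_borel[OF assms] mult_wt_eq_invert[where h="indicator E"]
  by (simp add: adjoint_fun_def Let_def measure_def emeasure_marginal_W emeasure_W)

lemma measure_marginal_W_le:
  "S \<in> sets Sph_borel \<Longrightarrow> measure (marginal W) S \<le> measure P (S \<times> UNIV)"
  using marginal_W_le_marginal_P[of S]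
  by (simp add: measure_def emeasure_marginal sets_P enn2real_mono less_top[symmetric])

lemma adjoint_fun_nonneg: "E \<in> sets Omega_borel \<Longrightarrow> 0 \<le> adjoint_fun \<alpha> P E"
  using measure_marginal_W_le[OF zero_slice_in_sets_Sph_borel] by (simp add: adjoint_fun_eq)

lemma emeasure_Q_eq_adjoint_fun:
  assumes E: "E \<in> sets Omega_borel"
  shows "emeasure Q E = ennreal (adjoint_fun \<alpha> P E)"
proof -
  let ?S = "{s. s \<in> Sph \<and> (s, 0) \<in> E}"
  have S: "?S \<in> sets Sph_borel"
    using zero_slice_in_sets_Sph_borel[OF E] .
  interpret W: finite_measure W
    by (rule finite_measure_W)
  interpret marginal_W: finite_measure "marginal W"
    by (rule W.finite_measure_distr) simp
  have "emeasure Q E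
      = ennreal (measure P (?S \<times> UNIV)) - ennreal (measure (marginal W) ?S) + ennreal (measure W E)"
    using E S by (simp add: emeasure_Q emeasure_defect emeasure_marginal sets_P
        emeasure_eq_measure W.emeasure_eq_measure marginal_W.emeasure_eq_measure)
  also have "\<dots> = ennreal (adjoint_fun \<alpha> P E)"
    using E measure_marginal_W_le[OF S]
    by (simp add: adjoint_fun_eq ennreal_minus ennreal_plus[symmetric] del: ennreal_plus)
  finally show ?thesis .
qed

lemma measure_Q: "E \<in> sets Omega_borel \<Longrightarrow> measure Q E = adjoint_fun \<alpha> P E"
  by (simp add: measure_def emeasure_Q_eq_adjoint_fun adjoint_fun_nonneg)

lemma adjoint_eq_Q: "adjoint \<alpha> P = Q"
proof -
  have "adjoint \<alpha> P = measure_of Omega (sets Omega_borel) (emeasure Q)"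
    unfolding adjoint_def
  proof (rule measure_of_eq)
    show "sets Omega_borel \<subseteq> Pow Omega"
      using sets.space_closed[of Omega_borel] by simp
  next
    fix E :: "('a \<times> 'a) set" assume "E \<in> sigma_sets Omega (sets Omega_borel)"
    then have "E \<in> sets Omega_borel"
      using sets.sigma_sets_eq[of Omega_borel] space_Omega_borel by metis
    then show "ennreal (adjoint_fun \<alpha> P E) = emeasure Q E"
      by (simp add: emeasure_Q_eq_adjoint_fun)
  qed
  also have "\<dots> = Q"
    using measure_of_of_measure[of Q] by (simp add: sets_Q)
  finally show ?thesis .
qed

lemma emeasure_Q_cylinder:
  assumes S: "S \<in> sets Sph_borel"
  shows "emeasure Q (S \<times> UNIV) = emeasure P (S \<times> UNIV)"
proof -
  have "{s. s \<in> Sph \<and> (s, 0) \<in> S \<times> UNIV} = S"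
    using S by (auto simp: sets_Sph_borel_iff)
  moreover have "emeasure W (S \<times> UNIV) = emeasure (marginal W) S"
    using S by (simp add: emeasure_marginal sets_W)
  ultimately show ?thesis
    using S marginal_W_le_marginal_P[OF S]
    by (simp add: emeasure_Q Times_in_sets_Omega_borel emeasure_defect diff_add_cancel_ennreal
        emeasure_marginal sets_P)
qed

lemma marginal_Q: "marginal Q = marginal P"
  by (rule measure_eqI) (simp_all add: emeasure_marginal sets_Q sets_P emeasure_Q_cylinder)

lemma prob_space_Q: "prob_space Q"
proof (rule prob_spaceI)
  have "emeasure Q (Sph \<times> UNIV) = emeasure P (Sph \<times> UNIV)"
    by (rule emeasure_Q_cylinder) (simp add: sets_Sph_borel_iff)
  also have "\<dots> = 1"
    using emeasure_space_1 by (simp add: Omega_def)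
  finally show "emeasure Q (space Q) = 1"
    by (simp add: Omega_def)
qed

lemma nn_integral_Q:
  assumes [measurable]: "h \<in> borel_measurable Omega_borel"
    and h_zero_section: "\<And>s. s \<in> Sph \<Longrightarrow> h (s, 0) = 0"
  shows "(\<integral>\<^sup>+ x. h x \<partial>Q) = (\<integral>\<^sup>+ x. h (invert x) * wt \<alpha> x \<partial>P)"
proof -
  have "(\<integral>\<^sup>+ x. h x \<partial>distr defect Omega_borel (\<lambda>s. (s, 0))) = (\<integral>\<^sup>+ s. h (s, 0) \<partial>defect)"
    by (rule nn_integral_distr) simp_all
  also have "\<dots> = (\<integral>\<^sup>+ s. 0 \<partial>defect)"
    by (intro nn_integral_cong) (simp add: h_zero_section sets_eq_imp_space_eq[OF sets_defect])
  finally show ?thesis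
    by (simp add: Q_def nn_integral_add_measure sets_W nn_integral_W)
qed

lemma nn_integral_Q_invert:
  assumes [measurable]: "h \<in> borel_measurable Omega_borel"
  shows "(\<integral>\<^sup>+ x. h (invert x) * wt \<alpha> x \<partial>Q) = (\<integral>\<^sup>+ x. indicator Omega_nz x * h x \<partial>P)"
proof -
  have "(\<integral>\<^sup>+ x. h (invert x) * wt \<alpha> x \<partial>Q) = (\<integral>\<^sup>+ x. h (invert (invert x)) * wt \<alpha> (invert x) * wt \<alpha> x \<partial>P)"
    by (rule nn_integral_Q) (measurable, simp add: wt_def)
  also have "\<dots> = (\<integral>\<^sup>+ x. indicator Omega_nz x * h x \<partial>P)"
    by (intro nn_integral_cong) (metis space_P invert_invert wt_invert_mult_wt mult.assoc mult.commute)
  finally show ?thesis .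
qed

lemma nn_integral_indicator_Q_invert:
  assumes E: "E \<in> sets Omega_borel"
  shows "(\<integral>\<^sup>+ x. indicator E (invert x) * wt \<alpha> x \<partial>Q) = emeasure P (E \<inter> Omega_nz)"
proof -
  have "(\<integral>\<^sup>+ x. indicator E (invert x) * wt \<alpha> x \<partial>Q) = (\<integral>\<^sup>+ x. indicator Omega_nz x * indicator E x \<partial>P)"
    using E by (simp add: nn_integral_Q_invert)
  also have "\<dots> = (\<integral>\<^sup>+ x. indicator (E \<inter> Omega_nz) x \<partial>P)"
    by (simp add: indicator_inter_arith mult.commute)
  also have "\<dots> = emeasure P (E \<inter> Omega_nz)"
    using E by (simp add: sets_P)
  finally show ?thesis .
qed

lemma Q_in_M_alpha: "Q \<in> M_alpha \<alpha>"
  unfolding M_alpha_def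
proof (intro CollectI conjI allI impI prob_space_Q sets_Q)
  fix S :: "'a set" assume "S \<in> sets borel" "S \<subseteq> Sph"
  then have S: "S \<in> sets Sph_borel"
    by (simp add: sets_Sph_borel_iff)
  have "(\<integral>\<^sup>+ x. indicator S (snd x /\<^sub>R norm (snd x)) * wt \<alpha> x \<partial>Q)
      = (\<integral>\<^sup>+ x. indicator (S \<times> UNIV) (invert x) * wt \<alpha> x \<partial>Q)"
    using mult_wt_eq_invert[where h="indicator (S \<times> UNIV)"] by (simp add: indicator_times)
  also have "\<dots> = emeasure P (S \<times> UNIV \<inter> Omega_nz)"
    using S by (simp add: nn_integral_indicator_Q_invert Times_in_sets_Omega_borel)
  also have "\<dots> \<le> emeasure P (S \<times> UNIV)"
    using S by (intro emeasure_mono) (auto simp: sets_P Times_in_sets_Omega_borel)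
  also have "\<dots> = emeasure Q (S \<times> UNIV)"
    using S by (simp add: emeasure_Q_cylinder)
  finally show "(\<integral>\<^sup>+ x. indicator S (snd x /\<^sub>R norm (snd x)) * wt \<alpha> x \<partial>Q) \<le> emeasure Q (S \<times> UNIV)" .
qed

lemma nn_integral_Q_Omega_nz:
  fixes f :: "'a \<times> 'a \<Rightarrow> real"
  assumes f: "f \<in> borel_measurable (restrict_space borel Omega_nz)"
  shows "(\<integral>\<^sup>+ x. indicator Omega_nz x * ennreal (f x) \<partial>Q) =
    (\<integral>\<^sup>+ x. indicator Omega_nz x *
      ennreal (f (snd x /\<^sub>R norm (snd x), fst x /\<^sub>R norm (snd x)) * norm (snd x) powr \<alpha>) \<partial>P)"
proof -
  have [measurable]: "(\<lambda>x. ennreal (indicator Omega_nz x *\<^sub>R f x)) \<in> borel_measurable Omega_borel"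
    using borel_measurable_indicator_Omega_nz_scaleR[OF f] measurable_ennreal by (rule measurable_compose)
  have "(\<integral>\<^sup>+ x. indicator Omega_nz x * ennreal (f x) \<partial>Q) = (\<integral>\<^sup>+ x. ennreal (indicator Omega_nz x *\<^sub>R f x) \<partial>Q)"
    by (simp only: ennreal_indicator_scaleR)
  also have "\<dots> = (\<integral>\<^sup>+ x. ennreal (indicator Omega_nz (invert x) *\<^sub>R f (invert x)) * wt \<alpha> x \<partial>P)"
    by (rule nn_integral_Q) (measurable, simp add: Omega_nz_def)
  also have "\<dots> = (\<integral>\<^sup>+ x. indicator Omega_nz x *
      ennreal (f (snd x /\<^sub>R norm (snd x), fst x /\<^sub>R norm (snd x)) * norm (snd x) powr \<alpha>) \<partial>P)"
  proof (intro nn_integral_cong)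
    fix x assume "x \<in> space P"
    then show "ennreal (indicator Omega_nz (invert x) *\<^sub>R f (invert x)) * wt \<alpha> x = indicator Omega_nz x *
        ennreal (f (snd x /\<^sub>R norm (snd x), fst x /\<^sub>R norm (snd x)) * norm (snd x) powr \<alpha>)"
      using invert_in_Omega_nz[of x]
      by (cases "snd x = 0") (auto simp: Omega_def Omega_nz_def wt_def invert_def ennreal_mult'')
  qed
  finally show ?thesis .
qed

lemma integrals_Q_Omega_nz:
  fixes f :: "'a \<times> 'a \<Rightarrow> real"
  assumes f: "f \<in> borel_measurable (restrict_space borel Omega_nz)"
  defines "g \<equiv> \<lambda>x. f (snd x /\<^sub>R norm (snd x), fst x /\<^sub>R norm (snd x)) * norm (snd x) powr \<alpha>"
  shows "(\<integral>\<^sup>+ x. indicator Omega_nz x * ennreal (f x) \<partial>Q) = (\<integral>\<^sup>+ x. indicator Omega_nz x * ennreal (g x) \<partial>P)"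
    and "(\<integral>\<^sup>+ x. indicator Omega_nz x * ennreal (- f x) \<partial>Q) = (\<integral>\<^sup>+ x. indicator Omega_nz x * ennreal (- g x) \<partial>P)"
    and "set_integrable Q Omega_nz f \<longleftrightarrow> set_integrable P Omega_nz g"
    and "(LINT x:Omega_nz|Q. f x) = (LINT x:Omega_nz|P. g x)"
proof -
  define F where "F x = indicator Omega_nz x *\<^sub>R f x" for x
  define G where "G x = indicator Omega_nz x *\<^sub>R g x" for x
  have [measurable]: "(\<lambda>x. norm (snd x) powr \<alpha>) \<in> borel_measurable Omega_borel"
    by (rule measurable_Omega_borel_of_borel) (simp add: borel_prod[symmetric])
  have [measurable]: "F \<in> borel_measurable Omega_borel"
    unfolding F_def by (rule borel_measurable_indicator_Omega_nz_scaleR[OF f])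
  have "(\<lambda>x. indicator Omega_nz x * (F (invert x) * norm (snd x) powr \<alpha>)) \<in> borel_measurable Omega_borel"
    by measurable
  moreover have "indicator Omega_nz x * (F (invert x) * norm (snd x) powr \<alpha>) = G x" for x
  proof (cases "x \<in> Omega_nz")
    case True
    then show ?thesis
      using invert_in_Omega_nz[OF True] by (simp add: F_def G_def g_def invert_Omega_nz)
  qed (simp add: G_def)
  ultimately have G: "G \<in> borel_measurable P"
    by (simp add: measurable_cong_sets[OF sets_P refl])
  have "(\<lambda>x. - f x) \<in> borel_measurable (restrict_space borel Omega_nz)"
    using f by measurable
  then show pos: "(\<integral>\<^sup>+ x. indicator Omega_nz x * ennreal (f x) \<partial>Q) = (\<integral>\<^sup>+ x. indicator Omega_nz x * ennreal (g x) \<partial>P)"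
    and neg: "(\<integral>\<^sup>+ x. indicator Omega_nz x * ennreal (- f x) \<partial>Q) = (\<integral>\<^sup>+ x. indicator Omega_nz x * ennreal (- g x) \<partial>P)"
    using nn_integral_Q_Omega_nz[OF f] nn_integral_Q_Omega_nz[of "\<lambda>x. - f x"] by (simp_all add: g_def)
  have F: "F \<in> borel_measurable Q"
    by (simp add: measurable_cong_sets[OF sets_Q refl])
  have pos': "(\<integral>\<^sup>+ x. ennreal (F x) \<partial>Q) = (\<integral>\<^sup>+ x. ennreal (G x) \<partial>P)"
    using pos by (simp only: F_def G_def ennreal_indicator_scaleR)
  have neg': "(\<integral>\<^sup>+ x. ennreal (- F x) \<partial>Q) = (\<integral>\<^sup>+ x. ennreal (- G x) \<partial>P)"
    using neg by (simp only: F_def G_def ennreal_uminus_indicator_scaleR)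
  have "integrable Q F \<longleftrightarrow> integrable P G" "integral\<^sup>L Q F = integral\<^sup>L P G"
    using F G pos' neg' by (rule integrable_eq_of_nn_integral_eq, rule integral_eq_of_nn_integral_eq)
  then show "set_integrable Q Omega_nz f \<longleftrightarrow> set_integrable P Omega_nz g"
    and "(LINT x:Omega_nz|Q. f x) = (LINT x:Omega_nz|P. g x)"
    by (simp_all only: set_integrable_def set_lebesgue_integral_def F_def[abs_def] G_def[abs_def])
qed

end

lemma (in M_alpha_measure) adjoint_adjoint: "adjoint \<alpha> (adjoint \<alpha> P) = P"
proof -
  interpret Q: M_alpha_measure \<alpha> Q
    by unfold_locales (rule Q_in_M_alpha)
  have "Q.Q = P"
  proof (rule measure_eqI)
    fix E assume "E \<in> sets Q.Q"
    then have E: "E \<in> sets Omega_borel"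
      by (simp add: Q.sets_Q)
    let ?S = "{s. s \<in> Sph \<and> (s, 0) \<in> E}"
    have S: "?S \<in> sets Sph_borel"
      by (rule zero_slice_in_sets_Sph_borel[OF E])
    have "emeasure Q.defect ?S = emeasure P (?S \<times> UNIV) - emeasure P (?S \<times> UNIV \<inter> Omega_nz)"
      using S by (simp add: Q.emeasure_defect marginal_Q emeasure_marginal sets_P Q.sets_W
          Q.emeasure_W nn_integral_indicator_Q_invert Times_in_sets_Omega_borel)
    also have "\<dots> = emeasure P (?S \<times> {0})"
      using S by (subst emeasure_Diff[symmetric])
        (auto simp: sets_P Times_in_sets_Omega_borel sets_Sph_borel_iff Omega_nz_def
          intro!: arg_cong[where f="emeasure P"])
    finally have "emeasure Q.Q E = emeasure P (?S \<times> {0}) + emeasure P (E \<inter> Omega_nz)"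
      using E by (simp add: Q.emeasure_Q Q.emeasure_W nn_integral_indicator_Q_invert)
    also have "\<dots> = emeasure P (?S \<times> {0} \<union> E \<inter> Omega_nz)"
      using E S by (intro plus_emeasure) (auto simp: sets_P Times_in_sets_Omega_borel, auto simp: Omega_nz_def)
    also have "?S \<times> {0} \<union> E \<inter> Omega_nz = E"
      using E by (auto simp: sets_Omega_borel_iff Omega_def Omega_nz_def)
    finally show "emeasure Q.Q E = emeasure P E" .
  qed (simp add: Q.sets_Q sets_P)
  then show ?thesis
    by (simp add: adjoint_eq_Q Q.adjoint_eq_Q)
qed

theorem lemma4p3:
  fixes \<alpha> :: real and P :: "('a::euclidean_space \<times> 'a) measure"
  assumes "\<alpha> > 0" and "P \<in> M_alpha \<alpha>"
  shows "prob_space (adjoint \<alpha> P)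
    \<and> sets (adjoint \<alpha> P) = sets Omega_borel
    \<and> (\<forall>E \<in> sets Omega_borel. measure (adjoint \<alpha> P) E = adjoint_fun \<alpha> P E)
    \<and> distr P Sph_borel fst = distr (adjoint \<alpha> P) Sph_borel fst
    \<and> (\<forall>f :: 'a \<times> 'a \<Rightarrow> real. f \<in> borel_measurable (restrict_space borel Omega_nz) \<longrightarrow>
         (let g = (\<lambda>x. f (snd x /\<^sub>R norm (snd x), fst x /\<^sub>R norm (snd x)) * norm (snd x) powr \<alpha>) in
          (\<integral>\<^sup>+ x. indicator Omega_nz x * ennreal (f x) \<partial>adjoint \<alpha> P)
             = (\<integral>\<^sup>+ x. indicator Omega_nz x * ennreal (g x) \<partial>P)
          \<and> (\<integral>\<^sup>+ x. indicator Omega_nz x * ennreal (- f x) \<partial>adjoint \<alpha> P)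
             = (\<integral>\<^sup>+ x. indicator Omega_nz x * ennreal (- g x) \<partial>P)
          \<and> (set_integrable (adjoint \<alpha> P) Omega_nz f \<longleftrightarrow> set_integrable P Omega_nz g)
          \<and> (set_integrable P Omega_nz g \<longrightarrow>
               (LINT x:Omega_nz|adjoint \<alpha> P. f x) = (LINT x:Omega_nz|P. g x))))
    \<and> adjoint \<alpha> P \<in> M_alpha \<alpha>
    \<and> adjoint \<alpha> (adjoint \<alpha> P) = P"
proof -
  interpret M_alpha_measure \<alpha> P
    by unfold_locales (rule assms(2))
  show ?thesis
    unfolding adjoint_eq_Q Let_def
    by (intro conjI ballI allI impI prob_space_Q sets_Q measure_Q marginal_Q[symmetric] Q_in_M_alpha
        integrals_Q_Omega_nz adjoint_adjoint[unfolded adjoint_eq_Q])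
qed

end
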